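(* If $X$ is a space satisfying ${\sf S}_1(\mathcal{G}_K,\mathcal{G}_\Gamma)$ and every compact subset of $X$ is finite, then for every $\gamma$-space $Y$, the product $X\times Y$ is a $\gamma$-space.
   Context: All spaces are infinite ${\sf T}_1$ topological spaces. $\mathcal{G}_K$ is the family of all collections $\mathcal{U}$ of ${\sf G}_\delta$ subsets of $X$ with $X\notin\mathcal{U}$ such that each compact subset of $X$ is contained in some member of $\mathcal{U}$. $\mathcal{G}_\Gamma$ is the family of infinite collections $\mathcal{U}$ of ${\sf G}_\delta$ subsets of $X$ such that every infinite subcollection covers $X$. ${\sf S}_1(\mathcal{A},\mathcal{B})$: for each sequence $(A_n)$ of elements of $\mathcal{A}$ there are $B_n\in A_n$ with $\{B_n:n\in\mathbb{N}\}\in\mathcal{B}$. $\Omega$: open covers $\mathcal{U}$ of the space with the space itself not in $\mathcal{U}$ such that every finite subset lies in some member. $\Gamma$: infinite open covers $\mathcal{U}$ such that each point lies outside only finitely many members of $\mathcal{U}$. A $\gamma$-space is a space satisfying ${\sf S}_1(\Omega,\Gamma)$. *)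

theory Defs
  imports "HOL-Analysis.Analysis"
begin

text \<open>Spaces are types of class t1_space (topology = open), assumed infinite.\<close>

definition S1 :: "'a set set set \<Rightarrow> 'a set set set \<Rightarrow> bool" where
  "S1 \<A> \<B> \<longleftrightarrow> (\<forall>A :: nat \<Rightarrow> 'a set set. (\<forall>n. A n \<in> \<A>) \<longrightarrow>
      (\<exists>B :: nat \<Rightarrow> 'a set. (\<forall>n. B n \<in> A n) \<and> range B \<in> \<B>))"

definition OmegaCovers :: "'a::topological_space set set set" where
  "OmegaCovers = {\<U>. (\<forall>U\<in>\<U>. open U) \<and> \<Union>\<U> = UNIV \<and> UNIV \<notin> \<U> \<and>
      (\<forall>F. finite F \<longrightarrow> (\<exists>U\<in>\<U>. F \<subseteq> U))}"

definition GammaCovers :: "'a::topological_space set set set" where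
  "GammaCovers = {\<U>. (\<forall>U\<in>\<U>. open U) \<and> \<Union>\<U> = UNIV \<and> infinite \<U> \<and>
      (\<forall>x. finite {U\<in>\<U>. x \<notin> U})}"

definition G_K :: "'a::topological_space set set set" where
  "G_K = {\<U>. (\<forall>U\<in>\<U>. gdelta_in euclidean U) \<and> UNIV \<notin> \<U> \<and>
      (\<forall>K. compact K \<longrightarrow> (\<exists>U\<in>\<U>. K \<subseteq> U))}"

definition G_Gamma :: "'a::topological_space set set set" where
  "G_Gamma = {\<U>. (\<forall>U\<in>\<U>. gdelta_in euclidean U) \<and> infinite \<U> \<and>
      (\<forall>\<V>\<subseteq>\<U>. infinite \<V> \<longrightarrow> \<Union>\<V> = UNIV)}"

definition gamma_space :: "'a::topological_space itself \<Rightarrow> bool" where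
  "gamma_space _ \<longleftrightarrow> S1 (OmegaCovers :: 'a set set set) (GammaCovers :: 'a set set set)"

end

theory Submission
  imports Defs
begin

(*
  Both hypotheses are used only through a selection of gamma-sequences: from covers C_0, C_1, ...
  one can pick U_n in C_n such that every point lies in all but finitely many U_n. For
  S_1(A, B) with B consisting of point-cofinite families this follows by applying the
  principle to the finite meets C_0 /\ ... /\ C_n and reindexing the selected family.

  Given omega-covers W_n of X x Y and a finite F in X, the open V for which some open U
  containing F has U x V inside a member of W_n form an omega-cover of Y (Wallace's theorem), so
  they contain a gamma-sequence V_m with witnesses U_m. The proper G_delta sets contained in such
  an intersection of the U_m, for some finite F, form a G_K-cover of X because compact subsets
  of X are finite. A gamma-sequence G_n in X, with its finite sets F_n, followed by a
  gamma-sequence V_n chosen from the V_m for F_n in Y, yields rectangles G_n x V_n each inside a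
  member of W_n; those members form a gamma-cover of X x Y.
*)

definition gamma_sequence :: "(nat \<Rightarrow> 'a set) \<Rightarrow> bool" where
  "gamma_sequence B \<longleftrightarrow> (\<forall>x. \<forall>\<^sub>F n in sequentially. x \<in> B n)"

definition selects_gamma_sequences :: "'a set set set \<Rightarrow> bool" where
  "selects_gamma_sequences \<A> \<longleftrightarrow>
     (\<forall>A. (\<forall>n. A n \<in> \<A>) \<longrightarrow> (\<exists>B. (\<forall>n. B n \<in> A n) \<and> gamma_sequence B))"

lemma selects_gamma_sequencesE:
  assumes "selects_gamma_sequences \<A>" "\<And>n. A n \<in> \<A>"
  obtains B where "\<And>n. B n \<in> A n" "gamma_sequence B"
  using assms unfolding selects_gamma_sequences_def by blast

lemma selects_gamma_sequences_const:
  assumes "selects_gamma_sequences \<A>" "\<U> \<in> \<A>"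
  shows "\<exists>B. (\<forall>n. B n \<in> \<U>) \<and> gamma_sequence B"
  using assms unfolding selects_gamma_sequences_def by auto

lemma gamma_sequence_iff_finite: "gamma_sequence B \<longleftrightarrow> (\<forall>x. finite {n. x \<notin> B n})"
  by (simp add: gamma_sequence_def eventually_cofinite flip: cofinite_eq_sequentially)

lemma gamma_sequence_eventually_subset:
  "gamma_sequence B \<Longrightarrow> finite S \<Longrightarrow> \<forall>\<^sub>F n in sequentially. S \<subseteq> B n"
  unfolding gamma_sequence_def by (simp add: subset_eq eventually_ball_finite)

lemma gamma_sequence_finite_subset:
  "gamma_sequence B \<Longrightarrow> finite S \<Longrightarrow> \<exists>n. S \<subseteq> B n"
  using eventually_happens'[OF sequentially_bot] gamma_sequence_eventually_subset by blast

lemma gamma_sequence_Times: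
  assumes "gamma_sequence A" "gamma_sequence B" "\<And>n. A n \<times> B n \<subseteq> C n"
  shows "gamma_sequence C"
  unfolding gamma_sequence_def
proof
  fix p :: "'a \<times> 'b"
  have "\<forall>\<^sub>F n in sequentially. fst p \<in> A n \<and> snd p \<in> B n"
    using assms(1,2) unfolding gamma_sequence_def by (simp add: eventually_conj)
  moreover have "p \<in> C n" if "fst p \<in> A n \<and> snd p \<in> B n" for n
    using that assms(3)[of n] by (cases p) auto
  ultimately show "\<forall>\<^sub>F n in sequentially. p \<in> C n"
    by (rule eventually_mono)
qed

lemma OmegaCoversI:
  assumes "\<And>U. U \<in> \<U> \<Longrightarrow> open U" "UNIV \<notin> \<U>" "\<And>F. finite F \<Longrightarrow> \<exists>U\<in>\<U>. F \<subseteq> U"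
  shows "\<U> \<in> OmegaCovers"
proof -
  have "x \<in> \<Union>\<U>" for x
    using assms(3)[of "{x}"] by blast
  then show ?thesis
    using assms unfolding OmegaCovers_def by blast
qed

lemma gamma_sequence_range_OmegaCovers:
  assumes "gamma_sequence B" "\<And>n. open (B n) \<and> B n \<noteq> UNIV"
  shows "range B \<in> OmegaCovers"
proof (rule OmegaCoversI)
  show "\<exists>U\<in>range B. F \<subseteq> U" if "finite F" for F
    using gamma_sequence_finite_subset[OF assms(1) that] by blast
qed (use assms(2) in auto)

lemma gamma_sequence_range_GammaCovers:
  assumes "gamma_sequence B" "\<And>n. open (B n) \<and> B n \<noteq> UNIV"
  shows "range B \<in> GammaCovers"
proof -
  have finite_misses: "finite {n. x \<notin> B n}" for x
    using assms(1) by (simp add: gamma_sequence_iff_finite)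
  have "infinite (range B)"
  proof
    assume "finite (range B)"
    then obtain U where U: "U \<in> range B" "infinite (B -` {U})"
      using inf_img_fin_dom[of B UNIV] by auto
    then obtain x where "x \<notin> U"
      using assms(2) by blast
    then have "B -` {U} \<subseteq> {n. x \<notin> B n}"
      by auto
    with U(2) finite_misses show False
      using finite_subset by blast
  qed
  moreover have "finite {U\<in>range B. x \<notin> U}" for x
  proof -
    have "{U\<in>range B. x \<notin> U} = B ` {n. x \<notin> B n}" by auto
    then show ?thesis
      using finite_misses by simp
  qed
  moreover have "\<Union>(range B) = UNIV"
    using gamma_sequence_range_OmegaCovers[OF assms] unfolding OmegaCovers_def by blast
  moreover have "\<forall>U\<in>range B. open U"
    using assms(2) by simp
  ultimately show ?thesis
    unfolding GammaCovers_def by simp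
qed

lemma reindex_with_finite_fibres:
  fixes f :: "nat \<Rightarrow> 'a"
  assumes "infinite (range f)"
  obtains g where "\<And>k. k \<le> g k" "\<And>y. finite {k. f (g k) = y}"
proof -
  have "\<exists>n. k \<le> n \<and> f n \<notin> f ` {..<k}" for k
  proof (rule ccontr)
    assume none: "\<nexists>n. k \<le> n \<and> f n \<notin> f ` {..<k}"
    have "f n \<in> f ` {..<k}" for n
      using none by (cases "n < k") (auto simp: not_less)
    then have "range f \<subseteq> f ` {..<k}"
      by blast
    with assms show False
      using finite_subset by blast
  qed
  then obtain g where g: "\<And>k. k \<le> g k" "\<And>k. f (g k) \<notin> f ` {..<k}"
    by metis
  have "{k. f (g k) = f (g k0)} \<subseteq> {..g k0}" for k0
  proof
    fix k
    assume k: "k \<in> {k. f (g k) = f (g k0)}"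
    show "k \<in> {..g k0}"
    proof (rule ccontr)
      assume "k \<notin> {..g k0}"
      then have "f (g k0) \<in> f ` {..<k}"
        by simp
      with k g(2)[of k] show False
        by simp
    qed
  qed
  then have "finite {k. f (g k) = y}" for y
    by (cases "\<exists>k0. f (g k0) = y") (auto intro: finite_subset)
  with g(1) show ?thesis
    by (rule that)
qed

definition meets_upto :: "(nat \<Rightarrow> 'a set set) \<Rightarrow> nat \<Rightarrow> 'a set set" where
  "meets_upto A n = {\<Inter>i\<le>n. c i | c. \<forall>i\<le>n. c i \<in> A i}"

lemma S1_imp_selects_gamma_sequences:
  assumes S1: "S1 \<A> \<B>"
    and point_cofinite: "\<And>\<U>. \<U> \<in> \<B> \<Longrightarrow> infinite \<U> \<and> (\<forall>x. finite {U\<in>\<U>. x \<notin> U})"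
    and meets: "\<And>A n. (\<forall>i. A i \<in> \<A>) \<Longrightarrow> meets_upto A n \<in> \<A>"
  shows "selects_gamma_sequences \<A>"
  unfolding selects_gamma_sequences_def
proof (intro allI impI)
  fix A :: "nat \<Rightarrow> 'a set set" assume "\<forall>n. A n \<in> \<A>"
  then obtain B where "\<And>n. B n \<in> meets_upto A n" and B: "range B \<in> \<B>"
    using S1 meets unfolding S1_def by metis
  then obtain c where c: "\<And>n. B n = (\<Inter>i\<le>n. c n i)" "\<And>n i. i \<le> n \<Longrightarrow> c n i \<in> A i"
    unfolding meets_upto_def by simp metis
  \<comment> \<open>The selected sets may repeat, so point-cofiniteness of the family range B alone
     does not make B a gamma-sequence; reindexing along finite fibres does.\<close>
  obtain g where g: "\<And>k. k \<le> g k" "\<And>U. finite {k. B (g k) = U}"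
    using reindex_with_finite_fibres point_cofinite[OF B] by blast
  have "gamma_sequence (\<lambda>k. c (g k) k)"
    unfolding gamma_sequence_iff_finite
  proof
    fix x
    have "{k. x \<notin> c (g k) k} \<subseteq> (\<Union>U\<in>{U\<in>range B. x \<notin> U}. {k. B (g k) = U})"
      using c(1) g(1) by fastforce
    moreover have "finite (\<Union>U\<in>{U\<in>range B. x \<notin> U}. {k. B (g k) = U})"
      using point_cofinite[OF B] g(2) by blast
    ultimately show "finite {k. x \<notin> c (g k) k}"
      by (rule finite_subset)
  qed
  moreover have "c (g k) k \<in> A k" for k
    using c(2) g(1) by blast
  ultimately show "\<exists>B. (\<forall>n. B n \<in> A n) \<and> gamma_sequence B"
    by (intro exI[of _ "\<lambda>k. c (g k) k"]) simp
qed

lemma meets_upto_cover: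
  assumes "\<And>i. \<exists>U\<in>A i. K \<subseteq> U"
  shows "\<exists>U\<in>meets_upto A n. K \<subseteq> U"
proof -
  obtain c where "\<And>i. c i \<in> A i \<and> K \<subseteq> c i"
    using assms by metis
  then show ?thesis
    unfolding meets_upto_def by blast
qed

lemma UNIV_notin_meets_upto:
  assumes "UNIV \<notin> A 0"
  shows "UNIV \<notin> meets_upto A n"
proof
  assume "UNIV \<in> meets_upto A n"
  then obtain c where c: "UNIV = (\<Inter>i\<le>n. c i)" "c 0 \<in> A 0"
    unfolding meets_upto_def by auto
  from c(1) have "c 0 = UNIV"
    by (auto simp: set_eq_iff)
  with c(2) assms show False
    by simp
qed

lemma OmegaCovers_meets_upto:
  assumes "\<forall>i. A i \<in> OmegaCovers"
  shows "meets_upto A n \<in> OmegaCovers"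
proof (rule OmegaCoversI)
  show "\<exists>U\<in>meets_upto A n. F \<subseteq> U" if "finite F" for F
    by (rule meets_upto_cover) (use assms that in \<open>auto simp: OmegaCovers_def\<close>)
  show "open U" if "U \<in> meets_upto A n" for U
    using that assms unfolding meets_upto_def OmegaCovers_def by (auto intro!: open_INT)
  show "UNIV \<notin> meets_upto A n"
    using assms by (intro UNIV_notin_meets_upto) (simp add: OmegaCovers_def)
qed

lemma G_K_meets_upto:
  assumes "\<forall>i. A i \<in> G_K"
  shows "meets_upto A n \<in> G_K"
proof -
  have "\<forall>K. compact K \<longrightarrow> (\<exists>U\<in>meets_upto A n. K \<subseteq> U)"
    using assms by (auto intro!: meets_upto_cover simp: G_K_def)
  moreover have "\<forall>U\<in>meets_upto A n. gdelta_in euclidean U"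
    using assms unfolding meets_upto_def G_K_def by (auto intro!: gdelta_in_Inter)
  moreover have "UNIV \<notin> meets_upto A n"
    using assms by (intro UNIV_notin_meets_upto) (simp add: G_K_def)
  ultimately show ?thesis
    unfolding G_K_def by blast
qed

lemma GammaCovers_point_cofinite:
  "\<U> \<in> GammaCovers \<Longrightarrow> infinite \<U> \<and> (\<forall>x. finite {U\<in>\<U>. x \<notin> U})"
  by (simp add: GammaCovers_def)

lemma G_Gamma_point_cofinite:
  assumes "\<U> \<in> G_Gamma"
  shows "infinite \<U> \<and> (\<forall>x. finite {U\<in>\<U>. x \<notin> U})"
proof -
  have \<U>: "infinite \<U>" "\<And>\<V>. \<V> \<subseteq> \<U> \<Longrightarrow> infinite \<V> \<Longrightarrow> \<Union>\<V> = UNIV"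
    using assms unfolding G_Gamma_def by auto
  have "finite {U\<in>\<U>. x \<notin> U}" for x
  proof (rule ccontr)
    assume "infinite {U\<in>\<U>. x \<notin> U}"
    then have "x \<in> \<Union>{U\<in>\<U>. x \<notin> U}"
      using \<U>(2)[of "{U\<in>\<U>. x \<notin> U}"] by auto
    then show False
      by auto
  qed
  with \<U>(1) show ?thesis
    by blast
qed

definition tube_sections ::
    "('a::topological_space \<times> 'b::topological_space) set set \<Rightarrow> 'a set \<Rightarrow> 'b set set" where
  "tube_sections \<W> F = {V. open V \<and> V \<noteq> UNIV \<and> (\<exists>U W. open U \<and> F \<subseteq> U \<and> W \<in> \<W> \<and> U \<times> V \<subseteq> W)}"

lemma OmegaCovers_tube_sections:
  fixes \<W> :: "('a::topological_space \<times> 'b::t1_space) set set"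
  assumes \<W>: "\<W> \<in> OmegaCovers" and F: "finite F" and "infinite (UNIV :: 'b set)"
  shows "tube_sections \<W> F \<in> OmegaCovers"
proof (rule OmegaCoversI)
  show "\<exists>V\<in>tube_sections \<W> F. S \<subseteq> V" if S: "finite S" for S
  proof -
    obtain W where W: "W \<in> \<W>" "F \<times> S \<subseteq> W" "open W"
      using \<W> finite_cartesian_product[OF F S] unfolding OmegaCovers_def by blast
    then obtain U V where UV: "open U" "open V" "F \<subseteq> U" "S \<subseteq> V" "U \<times> V \<subseteq> W"
      using Wallace_theorem_prod_topology[of euclidean F euclidean S W] F S
      by (auto simp: finite_imp_compact)
    obtain y where y: "y \<notin> S"
      using ex_new_if_finite[OF assms(3) S] by blast
    have "open (V - {y})" "V - {y} \<noteq> UNIV" "U \<times> (V - {y}) \<subseteq> W"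
      using UV by (auto intro: open_delete)
    with UV(1,3) W(1) have "V - {y} \<in> tube_sections \<W> F"
      unfolding tube_sections_def by blast
    moreover have "S \<subseteq> V - {y}"
      using UV(4) y by blast
    ultimately show ?thesis by blast
  qed
qed (auto simp: tube_sections_def)

lemma selects_gamma_sequences_tube_sections:
  fixes \<W> :: "nat \<Rightarrow> ('a::topological_space \<times> 'b::t1_space) set set"
  assumes Y: "selects_gamma_sequences (OmegaCovers :: 'b set set set)"
    and "infinite (UNIV :: 'b set)" "\<And>n. \<W> n \<in> OmegaCovers"
  obtains v where "\<And>n F m. finite F \<Longrightarrow> v n F m \<in> tube_sections (\<W> n) F"
    and "\<And>n F. finite F \<Longrightarrow> gamma_sequence (v n F)"
proof -
  have "\<forall>n. \<exists>v. \<forall>F. finite F \<longrightarrow> (\<forall>m. v F m \<in> tube_sections (\<W> n) F) \<and> gamma_sequence (v F)"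
  proof (intro allI choice)
    fix n and F :: "'a set"
    show "\<exists>v. finite F \<longrightarrow> (\<forall>m. v m \<in> tube_sections (\<W> n) F) \<and> gamma_sequence v"
    proof (cases "finite F")
      case True
      with assms(2,3) have "tube_sections (\<W> n) F \<in> OmegaCovers"
        by (simp add: OmegaCovers_tube_sections)
      then show ?thesis
        using selects_gamma_sequences_const[OF Y] by blast
    qed simp
  qed
  then obtain v where "\<forall>n F. finite F \<longrightarrow> (\<forall>m. v n F m \<in> tube_sections (\<W> n) F) \<and> gamma_sequence (v n F)"
    using choice[of "\<lambda>n v. \<forall>F. finite F \<longrightarrow> (\<forall>m. v F m \<in> tube_sections (\<W> n) F) \<and> gamma_sequence (v F)"]
    by blast
  then have "\<And>n F m. finite F \<Longrightarrow> v n F m \<in> tube_sections (\<W> n) F"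
    and "\<And>n F. finite F \<Longrightarrow> gamma_sequence (v n F)"
    by blast+
  then show thesis
    by (rule that)
qed

lemma G_K_tube_sections:
  fixes v :: "'a::t1_space set \<Rightarrow> nat \<Rightarrow> 'b::topological_space set"
    and \<W> :: "('a \<times> 'b) set set"
  assumes "\<And>K :: 'a set. compact K \<Longrightarrow> finite K" "infinite (UNIV :: 'a set)"
    and v: "\<And>F m. finite F \<Longrightarrow> v F m \<in> tube_sections \<W> F"
  shows "{G. gdelta_in euclidean G \<and> G \<noteq> UNIV \<and> (\<exists>F. finite F \<and> (\<forall>m. \<exists>W\<in>\<W>. G \<times> v F m \<subseteq> W))}
           \<in> G_K"
proof -
  have "\<exists>G. gdelta_in euclidean G \<and> G \<noteq> UNIV \<and> (\<exists>F. finite F \<and> (\<forall>m. \<exists>W\<in>\<W>. G \<times> v F m \<subseteq> W))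
          \<and> K \<subseteq> G"
    if "compact K" for K
  proof -
    have K: "finite K"
      using assms(1) that .
    obtain x where x: "x \<notin> K"
      using ex_new_if_finite[OF assms(2) K] by blast
    have "\<exists>U W. open U \<and> K \<subseteq> U \<and> W \<in> \<W> \<and> U \<times> v K m \<subseteq> W" for m
      using v[OF K, of m] unfolding tube_sections_def by blast
    then obtain U W where UW: "\<And>m. open (U m) \<and> K \<subseteq> U m \<and> W m \<in> \<W> \<and> U m \<times> v K m \<subseteq> W m"
      by metis
    let ?G = "(\<Inter>m. U m) - {x}"
    have "?G = \<Inter>(insert (- {x}) (range U))"
      by auto
    moreover have "gdelta_in euclidean (\<Inter>(insert (- {x}) (range U)))"
      using UW by (intro gdelta_in_Inter) (auto intro!: open_imp_gdelta_in simp flip: open_openin)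
    ultimately have "gdelta_in euclidean ?G"
      by simp
    moreover have "?G \<noteq> UNIV"
      by blast
    moreover have "\<forall>m. \<exists>W'\<in>\<W>. ?G \<times> v K m \<subseteq> W'"
      using UW by blast
    moreover have "K \<subseteq> ?G"
      using UW x by blast
    ultimately show ?thesis
      using K by (intro exI[of _ ?G]) blast
  qed
  then show ?thesis
    unfolding G_K_def by auto
qed

lemma gamma_sequence_rectangles_GammaCovers:
  assumes "gamma_sequence A" "gamma_sequence B"
    and \<W>: "\<And>n. \<W> n \<in> OmegaCovers" "\<And>n. \<exists>W\<in>\<W> n. A n \<times> B n \<subseteq> W"
  shows "\<exists>C. (\<forall>n. C n \<in> \<W> n) \<and> range C \<in> GammaCovers"
proof -
  obtain C where C: "\<And>n. C n \<in> \<W> n" "\<And>n. A n \<times> B n \<subseteq> C n"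
    using \<W>(2) by metis
  have "gamma_sequence C"
    using assms(1,2) C(2) by (rule gamma_sequence_Times)
  moreover have "open (C n) \<and> C n \<noteq> UNIV" for n
    using C(1)[of n] \<W>(1)[of n] unfolding OmegaCovers_def by auto
  ultimately have "range C \<in> GammaCovers"
    by (rule gamma_sequence_range_GammaCovers)
  with C(1) show ?thesis
    by blast
qed

lemma selects_gamma_sequences_Times:
  assumes X: "selects_gamma_sequences (G_K :: 'a::t1_space set set set)"
    and compact_finite: "\<And>K :: 'a set. compact K \<Longrightarrow> finite K"
    and "infinite (UNIV :: 'a set)"
    and Y: "selects_gamma_sequences (OmegaCovers :: 'b::t1_space set set set)"
    and "infinite (UNIV :: 'b set)"
  shows "S1 (OmegaCovers :: ('a \<times> 'b) set set set) GammaCovers"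
  unfolding S1_def
proof (intro allI impI)
  fix \<W> :: "nat \<Rightarrow> ('a \<times> 'b) set set"
  assume "\<forall>n. \<W> n \<in> OmegaCovers"
  then have \<W>: "\<And>n. \<W> n \<in> OmegaCovers"
    by blast
  obtain v where v: "\<And>n F m. finite F \<Longrightarrow> v n F m \<in> tube_sections (\<W> n) F"
    and v_gamma: "\<And>n F. finite F \<Longrightarrow> gamma_sequence (v n F)"
    by (rule selects_gamma_sequences_tube_sections[where \<W> = \<W>, OF Y assms(5) \<W>]) blast
  define \<G> where "\<G> n = {G. gdelta_in euclidean G \<and> G \<noteq> UNIV
      \<and> (\<exists>F. finite F \<and> (\<forall>m. \<exists>W\<in>\<W> n. G \<times> v n F m \<subseteq> W))}" for n
  have "\<G> n \<in> G_K" for n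
    unfolding \<G>_def using compact_finite assms(3) v by (rule G_K_tube_sections)
  then obtain A where "\<And>n. A n \<in> \<G> n" and A: "gamma_sequence A"
    by (rule selects_gamma_sequencesE[OF X, of \<G>]) blast
  then have "\<exists>F. finite F \<and> (\<forall>m. \<exists>W\<in>\<W> n. A n \<times> v n F m \<subseteq> W)" for n
    unfolding \<G>_def by blast
  then obtain F where F: "\<And>n. finite (F n)" "\<And>n m. \<exists>W\<in>\<W> n. A n \<times> v n (F n) m \<subseteq> W"
    by metis
  have "range (v n (F n)) \<in> OmegaCovers" for n
  proof (rule gamma_sequence_range_OmegaCovers)
    show "gamma_sequence (v n (F n))"
      using v_gamma F(1) .
    show "open (v n (F n) m) \<and> v n (F n) m \<noteq> UNIV" for m
      using v[OF F(1)] unfolding tube_sections_def by blast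
  qed
  then obtain B where B_range: "\<And>n. B n \<in> range (v n (F n))" and B: "gamma_sequence B"
    by (rule selects_gamma_sequencesE[OF Y, of "\<lambda>n. range (v n (F n))"]) blast
  have "\<exists>W\<in>\<W> n. A n \<times> B n \<subseteq> W" for n
  proof -
    obtain m where "B n = v n (F n) m"
      using B_range[of n] by blast
    then show ?thesis
      using F(2)[of n m] by simp
  qed
  with A B \<W> show "\<exists>C. (\<forall>n. C n \<in> \<W> n) \<and> range C \<in> GammaCovers"
    by (rule gamma_sequence_rectangles_GammaCovers)
qed

theorem theorem4p18:
  assumes "infinite (UNIV :: 'a::t1_space set)"
    and "infinite (UNIV :: 'b::t1_space set)"
    and "S1 (G_K :: 'a set set set) (G_Gamma :: 'a set set set)"
    and "\<forall>K :: 'a set. compact K \<longrightarrow> finite K"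
    and "gamma_space TYPE('b)"
  shows "gamma_space TYPE('a \<times> 'b)"
proof -
  have "selects_gamma_sequences (G_K :: 'a set set set)"
    using assms(3) G_Gamma_point_cofinite G_K_meets_upto by (rule S1_imp_selects_gamma_sequences)
  moreover have "selects_gamma_sequences (OmegaCovers :: 'b set set set)"
    using assms(5)[unfolded gamma_space_def] GammaCovers_point_cofinite OmegaCovers_meets_upto
    by (rule S1_imp_selects_gamma_sequences)
  ultimately show ?thesis
    unfolding gamma_space_def using assms(1,2,4) by (intro selects_gamma_sequences_Times) auto
qed

end
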